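(* Let $Q$ be a finite connected quiver, $I$ an admissible ideal of $\Bbbk Q$ satisfying the commutativity condition of loops, $A=\Bbbk Q/I$, and $B=A/J$ the loop-reduced algebra of $A$. Regard finite-dimensional $B$-modules as $A$-modules via the projection $A\to B$. Then: (1) If $M,N$ are finite-dimensional $B$-modules with $\mathrm{Hom}_B(M,N)=0$, then $\mathrm{Ext}^1_A(M,N)\cong \mathrm{Ext}^1_B(M,N)$ as $\Bbbk$-vector spaces. (2) If $M$ is a finite-dimensional $B$-module which is a brick (i.e. $\mathrm{Hom}_B(M,M)=\Bbbk$) and $M$ is not simple, then $\mathrm{Ext}^1_A(M,M)\cong \mathrm{Ext}^1_B(M,M)$ as $\Bbbk$-vector spaces.
   Context: $\Bbbk$ is an algebraically closed field; all modules are finite-dimensional left modules. Let $Q$ be a finite connected quiver, $I$ an admissible ideal of the path algebra $\Bbbk Q$ and $A=\Bbbk Q/I$. A loop is an arrow whose source and target coincide. We say $I$ satisfies the commutativity condition of loops if: (a) every path of length two consisting of a loop followed by a non-loop arrow lies in $I$; (b) every path of length two consisting of a non-loop arrow followed by a loop lies in $I$; (c) for any two loops $\gamma_1,\gamma_2$ at the same vertex, $\gamma_1\gamma_2-\gamma_2\gamma_1\in I$. In this case let $J$ be the two-sided ideal of $A$ generated by (the classes of) all loops; $B:=A/J$ is called the loop-reduced algebra of $A$, and $A$ a loop-extended algebra of $B$. The category $B$-mod is thereby a full subcategory of $A$-mod. *)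

theory Defs
  imports Main "HOL-Library.Function_Algebras" "HOL-Computational_Algebra.Polynomial"
begin

text \<open>A path is a pair (v, as): start vertex v and the list of
arrows in the order in which they are traversed (the trivial path e_v is (v, [])).\<close>

definition is_path :: "('a \<Rightarrow> 'v) \<Rightarrow> ('a \<Rightarrow> 'v) \<Rightarrow> 'v \<times> 'a list \<Rightarrow> bool" where
  "is_path src tgt p =
     ((case snd p of [] \<Rightarrow> True | a # _ \<Rightarrow> src a = fst p) \<and>
      (\<forall>i. Suc i < length (snd p) \<longrightarrow> tgt (snd p ! i) = src (snd p ! Suc i)))"

definition path_end :: "('a \<Rightarrow> 'v) \<Rightarrow> 'v \<times> 'a list \<Rightarrow> 'v" where
  "path_end tgt p = (if snd p = [] then fst p else tgt (last (snd p)))"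

definition quiver_connected :: "('a \<Rightarrow> 'v) \<Rightarrow> ('a \<Rightarrow> 'v) \<Rightarrow> bool" where
  "quiver_connected src tgt =
     (\<forall>u w. (u, w) \<in> ({(src a, tgt a) | a. True} \<union> {(tgt a, src a) | a. True})\<^sup>*)"

definition path_alg :: "('a \<Rightarrow> 'v) \<Rightarrow> ('a \<Rightarrow> 'v) \<Rightarrow> (('v \<times> 'a list) \<Rightarrow> 'k::field) set" where
  "path_alg src tgt = {f. finite {p. f p \<noteq> 0} \<and> (\<forall>p. f p \<noteq> 0 \<longrightarrow> is_path src tgt p)}"

text \<open>Product in kQ (concatenation of paths, f-part traversed first).\<close>
definition pmult :: "('a \<Rightarrow> 'v) \<Rightarrow> ('a \<Rightarrow> 'v) \<Rightarrow> (('v \<times> 'a list) \<Rightarrow> 'k::field)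
      \<Rightarrow> (('v \<times> 'a list) \<Rightarrow> 'k) \<Rightarrow> (('v \<times> 'a list) \<Rightarrow> 'k)" where
  "pmult src tgt f g = (\<lambda>p. if is_path src tgt p then
       (\<Sum>i\<le>length (snd p). f (fst p, take i (snd p)) *
           g (path_end tgt (fst p, take i (snd p)), drop i (snd p))) else 0)"

definition path_delta :: "'v \<times> 'a list \<Rightarrow> ('v \<times> 'a list) \<Rightarrow> 'k::field" where
  "path_delta p = (\<lambda>q. if q = p then 1 else 0)"

definition is_ideal :: "('a \<Rightarrow> 'v) \<Rightarrow> ('a \<Rightarrow> 'v) \<Rightarrow> (('v \<times> 'a list) \<Rightarrow> 'k::field) set \<Rightarrow> bool" where
  "is_ideal src tgt I =
     (I \<subseteq> path_alg src tgt \<and> 0 \<in> I \<and> (\<forall>f\<in>I. \<forall>g\<in>I. f + g \<in> I) \<and>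
      (\<forall>c. \<forall>f\<in>I. (\<lambda>p. c * f p) \<in> I) \<and>
      (\<forall>f\<in>I. \<forall>g\<in>path_alg src tgt. pmult src tgt f g \<in> I \<and> pmult src tgt g f \<in> I))"

text \<open>R^m = span of the paths of length at least m (R the arrow ideal).\<close>
definition arrow_ideal_pow :: "('a \<Rightarrow> 'v) \<Rightarrow> ('a \<Rightarrow> 'v) \<Rightarrow> nat \<Rightarrow> (('v \<times> 'a list) \<Rightarrow> 'k::field) set" where
  "arrow_ideal_pow src tgt m =
     {f \<in> path_alg src tgt. \<forall>p. f p \<noteq> 0 \<longrightarrow> m \<le> length (snd p)}"

definition admissible :: "('a \<Rightarrow> 'v) \<Rightarrow> ('a \<Rightarrow> 'v) \<Rightarrow> (('v \<times> 'a list) \<Rightarrow> 'k::field) set \<Rightarrow> bool" where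
  "admissible src tgt I =
     (is_ideal src tgt I \<and> I \<subseteq> arrow_ideal_pow src tgt 2 \<and>
      (\<exists>m\<ge>2. arrow_ideal_pow src tgt m \<subseteq> I))"

definition is_loop :: "('a \<Rightarrow> 'v) \<Rightarrow> ('a \<Rightarrow> 'v) \<Rightarrow> 'a \<Rightarrow> bool" where
  "is_loop src tgt a = (src a = tgt a)"

definition comm_loops :: "('a \<Rightarrow> 'v) \<Rightarrow> ('a \<Rightarrow> 'v) \<Rightarrow> (('v \<times> 'a list) \<Rightarrow> 'k::field) set \<Rightarrow> bool" where
  "comm_loops src tgt I =
     ((\<forall>g a. is_loop src tgt g \<and> \<not> is_loop src tgt a \<and> tgt g = src a
          \<longrightarrow> path_delta (src g, [g, a]) \<in> I) \<and>
      (\<forall>a g. \<not> is_loop src tgt a \<and> is_loop src tgt g \<and> tgt a = src g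
          \<longrightarrow> path_delta (src a, [a, g]) \<in> I) \<and>
      (\<forall>g1 g2. is_loop src tgt g1 \<and> is_loop src tgt g2 \<and> src g1 = src g2
          \<longrightarrow> path_delta (src g1, [g1, g2]) - path_delta (src g1, [g2, g1]) \<in> I))"

text \<open>The ideal of kQ generated by the loops: span of paths containing a loop.
 Its image in A = kQ/I is J, so B = A/J = kQ/(I + loop_span).\<close>
definition loop_span :: "('a \<Rightarrow> 'v) \<Rightarrow> ('a \<Rightarrow> 'v) \<Rightarrow> (('v \<times> 'a list) \<Rightarrow> 'k::field) set" where
  "loop_span src tgt =
     {f \<in> path_alg src tgt. \<forall>p. f p \<noteq> 0 \<longrightarrow> (\<exists>a\<in>set (snd p). is_loop src tgt a)}"

definition loop_reduced_ideal :: "('a \<Rightarrow> 'v) \<Rightarrow> ('a \<Rightarrow> 'v) \<Rightarrow> (('v \<times> 'a list) \<Rightarrow> 'k::field) set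
     \<Rightarrow> (('v \<times> 'a list) \<Rightarrow> 'k) set" where
  "loop_reduced_ideal src tgt I = {f + g | f g. f \<in> I \<and> g \<in> loop_span src tgt}"

text \<open>A finite-dimensional kQ-module is a representation: a dimension d v at each vertex
 (the space k^(d v)) and a matrix m a :: nat => nat => 'k of size d (tgt a) x d (src a) for each arrow
 (only entries within range are relevant).\<close>

definition mmul :: "nat \<Rightarrow> (nat \<Rightarrow> nat \<Rightarrow> 'k::field) \<Rightarrow> (nat \<Rightarrow> nat \<Rightarrow> 'k) \<Rightarrow> nat \<Rightarrow> nat \<Rightarrow> 'k" where
  "mmul n X Y = (\<lambda>i j. \<Sum>l<n. X i l * Y l j)"

definition idm :: "nat \<Rightarrow> nat \<Rightarrow> 'k::field" where
  "idm = (\<lambda>i j. if i = j then 1 else 0)"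

text \<open>The linear map of a path (traversed left to right).\<close>
fun eval_path :: "('a \<Rightarrow> 'v) \<Rightarrow> ('v \<Rightarrow> nat) \<Rightarrow> ('a \<Rightarrow> nat \<Rightarrow> nat \<Rightarrow> 'k::field)
     \<Rightarrow> 'a list \<Rightarrow> nat \<Rightarrow> nat \<Rightarrow> 'k" where
  "eval_path tgt d m [] = idm"
| "eval_path tgt d m (a # as) = mmul (d (tgt a)) (eval_path tgt d m as) (m a)"

definition annihilates :: "('a \<Rightarrow> 'v) \<Rightarrow> ('a \<Rightarrow> 'v) \<Rightarrow> ('v \<Rightarrow> nat) \<Rightarrow> ('a \<Rightarrow> nat \<Rightarrow> nat \<Rightarrow> 'k::field)
     \<Rightarrow> (('v \<times> 'a list) \<Rightarrow> 'k) \<Rightarrow> bool" where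
  "annihilates src tgt d m f =
     (\<forall>u w. \<forall>i<d w. \<forall>j<d u.
        (\<Sum>p\<in>{p. f p \<noteq> 0 \<and> fst p = u \<and> path_end tgt p = w}.
            f p * eval_path tgt d m (snd p) i j) = 0)"

definition is_module :: "('a \<Rightarrow> 'v) \<Rightarrow> ('a \<Rightarrow> 'v) \<Rightarrow> (('v \<times> 'a list) \<Rightarrow> 'k::field) set
     \<Rightarrow> ('v \<Rightarrow> nat) \<Rightarrow> ('a \<Rightarrow> nat \<Rightarrow> nat \<Rightarrow> 'k) \<Rightarrow> bool" where
  "is_module src tgt K d m = (\<forall>f\<in>K. annihilates src tgt d m f)"

text \<open>Module homomorphisms M -> N (families of matrices f v of size dN v x dM v).\<close>
definition hom_set :: "('a \<Rightarrow> 'v) \<Rightarrow> ('a \<Rightarrow> 'v) \<Rightarrow> ('v \<Rightarrow> nat) \<Rightarrow> ('a \<Rightarrow> nat \<Rightarrow> nat \<Rightarrow> 'k::field)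
     \<Rightarrow> ('v \<Rightarrow> nat) \<Rightarrow> ('a \<Rightarrow> nat \<Rightarrow> nat \<Rightarrow> 'k) \<Rightarrow> ('v \<Rightarrow> nat \<Rightarrow> nat \<Rightarrow> 'k) set" where
  "hom_set src tgt dM mM dN mN =
     {f. \<forall>a. \<forall>i<dN (tgt a). \<forall>j<dM (src a).
          mmul (dN (src a)) (mN a) (f (src a)) i j = mmul (dM (tgt a)) (f (tgt a)) (mM a) i j}"

definition hom_zero :: "('a \<Rightarrow> 'v) \<Rightarrow> ('a \<Rightarrow> 'v) \<Rightarrow> ('v \<Rightarrow> nat) \<Rightarrow> ('a \<Rightarrow> nat \<Rightarrow> nat \<Rightarrow> 'k::field)
     \<Rightarrow> ('v \<Rightarrow> nat) \<Rightarrow> ('a \<Rightarrow> nat \<Rightarrow> nat \<Rightarrow> 'k) \<Rightarrow> bool" where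
  "hom_zero src tgt dM mM dN mN =
     (\<forall>f\<in>hom_set src tgt dM mM dN mN. \<forall>v. \<forall>i<dN v. \<forall>j<dM v. f v i j = 0)"

definition is_brick :: "('a \<Rightarrow> 'v) \<Rightarrow> ('a \<Rightarrow> 'v) \<Rightarrow> ('v \<Rightarrow> nat) \<Rightarrow> ('a \<Rightarrow> nat \<Rightarrow> nat \<Rightarrow> 'k::field) \<Rightarrow> bool" where
  "is_brick src tgt d m =
     ((\<exists>v. 0 < d v) \<and>
      (\<forall>f\<in>hom_set src tgt d m d m. \<exists>c. \<forall>v. \<forall>i<d v. \<forall>j<d v. f v i j = c * idm i j))"

definition vecs :: "nat \<Rightarrow> (nat \<Rightarrow> 'k::field) set" where
  "vecs n = {x. \<forall>i\<ge>n. x i = 0}"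

definition mvmul :: "nat \<Rightarrow> nat \<Rightarrow> (nat \<Rightarrow> nat \<Rightarrow> 'k::field) \<Rightarrow> (nat \<Rightarrow> 'k) \<Rightarrow> nat \<Rightarrow> 'k" where
  "mvmul r n X x = (\<lambda>i. if i < r then (\<Sum>j<n. X i j * x j) else 0)"

definition is_subrep :: "('a \<Rightarrow> 'v) \<Rightarrow> ('a \<Rightarrow> 'v) \<Rightarrow> ('v \<Rightarrow> nat) \<Rightarrow> ('a \<Rightarrow> nat \<Rightarrow> nat \<Rightarrow> 'k::field)
     \<Rightarrow> ('v \<Rightarrow> (nat \<Rightarrow> 'k) set) \<Rightarrow> bool" where
  "is_subrep src tgt d m U =
     ((\<forall>v. U v \<subseteq> vecs (d v) \<and> 0 \<in> U v \<and> (\<forall>x\<in>U v. \<forall>y\<in>U v. x + y \<in> U v) \<and>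
          (\<forall>c. \<forall>x\<in>U v. (\<lambda>i. c * x i) \<in> U v)) \<and>
     (\<forall>a. \<forall>x\<in>U (src a). mvmul (d (tgt a)) (d (src a)) (m a) x \<in> U (tgt a)))"

definition is_simple :: "('a \<Rightarrow> 'v) \<Rightarrow> ('a \<Rightarrow> 'v) \<Rightarrow> ('v \<Rightarrow> nat) \<Rightarrow> ('a \<Rightarrow> nat \<Rightarrow> nat \<Rightarrow> 'k::field) \<Rightarrow> bool" where
  "is_simple src tgt d m =
     ((\<exists>v. 0 < d v) \<and>
      (\<forall>U. is_subrep src tgt d m U \<longrightarrow> (\<forall>v. U v = {0}) \<or> (\<forall>v. U v = vecs (d v))))"

text \<open>Ext^1(M,N) over kQ/K, computed from extensions 0 -> N -> E -> M -> 0: every such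
 extension is (up to equivalence) E_v = N_v (+) M_v with E_a = [[N_a, delta_a],[0, M_a]];
 Ext^1 = {delta : E is a kQ/K-module} / {coboundaries}.\<close>

definition cochains :: "('a \<Rightarrow> 'v) \<Rightarrow> ('a \<Rightarrow> 'v) \<Rightarrow> ('v \<Rightarrow> nat) \<Rightarrow> ('v \<Rightarrow> nat)
     \<Rightarrow> ('a \<Rightarrow> nat \<Rightarrow> nat \<Rightarrow> 'k::field) set" where
  "cochains src tgt dM dN =
     {\<delta>. \<forall>a i j. (dN (tgt a) \<le> i \<or> dM (src a) \<le> j) \<longrightarrow> \<delta> a i j = 0}"

definition ext_dim :: "('v \<Rightarrow> nat) \<Rightarrow> ('v \<Rightarrow> nat) \<Rightarrow> 'v \<Rightarrow> nat" where
  "ext_dim dM dN v = dN v + dM v"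

definition ext_mat :: "('a \<Rightarrow> 'v) \<Rightarrow> ('a \<Rightarrow> 'v) \<Rightarrow> ('v \<Rightarrow> nat) \<Rightarrow> ('a \<Rightarrow> nat \<Rightarrow> nat \<Rightarrow> 'k::field)
     \<Rightarrow> ('v \<Rightarrow> nat) \<Rightarrow> ('a \<Rightarrow> nat \<Rightarrow> nat \<Rightarrow> 'k) \<Rightarrow> ('a \<Rightarrow> nat \<Rightarrow> nat \<Rightarrow> 'k)
     \<Rightarrow> 'a \<Rightarrow> nat \<Rightarrow> nat \<Rightarrow> 'k" where
  "ext_mat src tgt dM mM dN mN \<delta> = (\<lambda>a i j.
      if i < dN (tgt a) then (if j < dN (src a) then mN a i j else \<delta> a i (j - dN (src a)))
      else (if j < dN (src a) then 0 else mM a (i - dN (tgt a)) (j - dN (src a))))"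

definition ext_cocycles :: "('a \<Rightarrow> 'v) \<Rightarrow> ('a \<Rightarrow> 'v) \<Rightarrow> (('v \<times> 'a list) \<Rightarrow> 'k::field) set
     \<Rightarrow> ('v \<Rightarrow> nat) \<Rightarrow> ('a \<Rightarrow> nat \<Rightarrow> nat \<Rightarrow> 'k) \<Rightarrow> ('v \<Rightarrow> nat) \<Rightarrow> ('a \<Rightarrow> nat \<Rightarrow> nat \<Rightarrow> 'k)
     \<Rightarrow> ('a \<Rightarrow> nat \<Rightarrow> nat \<Rightarrow> 'k) set" where
  "ext_cocycles src tgt K dM mM dN mN =
     {\<delta> \<in> cochains src tgt dM dN.
        is_module src tgt K (ext_dim dM dN) (ext_mat src tgt dM mM dN mN \<delta>)}"

definition ext_coboundaries :: "('a \<Rightarrow> 'v) \<Rightarrow> ('a \<Rightarrow> 'v)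
     \<Rightarrow> ('v \<Rightarrow> nat) \<Rightarrow> ('a \<Rightarrow> nat \<Rightarrow> nat \<Rightarrow> 'k::field) \<Rightarrow> ('v \<Rightarrow> nat) \<Rightarrow> ('a \<Rightarrow> nat \<Rightarrow> nat \<Rightarrow> 'k)
     \<Rightarrow> ('a \<Rightarrow> nat \<Rightarrow> nat \<Rightarrow> 'k) set" where
  "ext_coboundaries src tgt dM mM dN mN =
     {\<delta> \<in> cochains src tgt dM dN. \<exists>f :: 'v \<Rightarrow> nat \<Rightarrow> nat \<Rightarrow> 'k.
        \<forall>a. \<forall>i<dN (tgt a). \<forall>j<dM (src a).
          \<delta> a i j = mmul (dN (src a)) (mN a) (f (src a)) i j - mmul (dM (tgt a)) (f (tgt a)) (mM a) i j}"

definition cscale :: "'k::field \<Rightarrow> ('a \<Rightarrow> nat \<Rightarrow> nat \<Rightarrow> 'k) \<Rightarrow> ('a \<Rightarrow> nat \<Rightarrow> nat \<Rightarrow> 'k)" where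
  "cscale c \<delta> = (\<lambda>a i j. c * \<delta> a i j)"

definition ext1_dim :: "('a \<Rightarrow> 'v) \<Rightarrow> ('a \<Rightarrow> 'v) \<Rightarrow> (('v \<times> 'a list) \<Rightarrow> 'k::field) set
     \<Rightarrow> ('v \<Rightarrow> nat) \<Rightarrow> ('a \<Rightarrow> nat \<Rightarrow> nat \<Rightarrow> 'k) \<Rightarrow> ('v \<Rightarrow> nat) \<Rightarrow> ('a \<Rightarrow> nat \<Rightarrow> nat \<Rightarrow> 'k) \<Rightarrow> nat" where
  "ext1_dim src tgt K dM mM dN mN =
     vector_space.dim cscale (ext_cocycles src tgt K dM mM dN mN)
     - vector_space.dim cscale (ext_coboundaries src tgt dM mM dN mN)"

definition alg_closed_field :: "'k::field itself \<Rightarrow> bool" where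
  "alg_closed_field _ = (\<forall>p :: 'k poly. 0 < degree p \<longrightarrow> (\<exists>x. poly p x = 0))"

end

theory Submission imports Defs begin

text \<open>
  An extension of M by N is a block representation E_a = [[N_a, \<delta>_a], [0, M_a]].  Since M and N
  are B-modules, loops act on them by zero, so for a loop g at v the relations "loop then arrow"
  and "arrow then loop" of the commutativity condition, read off in the upper right block of E,
  say exactly that \<delta>_g, placed at v and zero elsewhere, is a homomorphism M \<rightarrow> N.  If
  Hom(M, N) = 0 this forces \<delta>_g = 0.  If M = N is a brick, the homomorphism is a scalar; a
  nonzero scalar would confine M to the vertex v, where all arrows are loops acting by zero, and
  a brick there is one-dimensional, hence simple.  So in both cases every A-extension is a
  B-extension; the cocycle spaces agree and the coboundaries do not depend on the algebra.
\<close>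

lemma sum_lessThan_add_nat:
  fixes F :: "nat \<Rightarrow> 'b::comm_monoid_add"
  shows "(\<Sum>l<n + m. F l) = (\<Sum>l<n. F l) + (\<Sum>l<m. F (n + l))"
  by (induction m) (simp_all add: add.assoc)

lemma is_path_Cons:
  "is_path src tgt (v, a # as) \<longleftrightarrow> src a = v \<and> is_path src tgt (tgt a, as)"
proof -
  have "(\<forall>i. Suc i < length (a # as) \<longrightarrow> tgt ((a # as) ! i) = src ((a # as) ! Suc i)) \<longleftrightarrow>
        (case as of [] \<Rightarrow> True | b # _ \<Rightarrow> src b = tgt a) \<and>
        (\<forall>i. Suc i < length as \<longrightarrow> tgt (as ! i) = src (as ! Suc i))"
    by (cases as) (auto simp: All_less_Suc2 less_Suc_eq_0_disj)
  then show ?thesis by (simp only: is_path_def fst_conv snd_conv list.case)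
qed

lemma mmul_idm_left: "i < n \<Longrightarrow> mmul n idm X i j = X i j"
  unfolding mmul_def idm_def by (simp add: if_distrib[of "\<lambda>c. c * _"] cong: if_cong)

lemma eval_path_single: "i < d (tgt a) \<Longrightarrow> eval_path tgt d m [a] i j = m a i j"
  by (simp add: mmul_idm_left)

lemma eval_path_pair:
  "i < d (tgt b) \<Longrightarrow> eval_path tgt d m [a, b] i j = mmul (d (tgt a)) (m b) (m a) i j"
  unfolding eval_path.simps(2)[of _ _ _ a] mmul_def[of "d (tgt a)"]
  by (simp add: eval_path_single del: eval_path.simps)

lemma eval_path_eq_0_if_arrow_acts_trivially:
  assumes "is_path src tgt (v, as)" and "g \<in> set as"
    and "\<forall>i<d (tgt g). \<forall>j<d (src g). m g i j = 0"
    and "j < d v"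
  shows "eval_path tgt d m as i j = 0"
  using assms
proof (induction as arbitrary: v i j)
  case Nil
  then show ?case by simp
next
  case (Cons a as)
  then have "src a = v" and path: "is_path src tgt (tgt a, as)"
    by (simp_all add: is_path_Cons)
  show ?case
  proof (cases "g = a")
    case True
    then show ?thesis using Cons.prems \<open>src a = v\<close> by (simp add: mmul_def)
  next
    case False
    then have "g \<in> set as" using Cons.prems(2) by simp
    then have "\<forall>l<d (tgt a). eval_path tgt d m as i l = 0"
      using Cons.IH[OF path _ Cons.prems(3)] by blast
    then show ?thesis by (simp add: mmul_def)
  qed
qed

lemma annihilates_path_delta:
  assumes "annihilates src tgt d m (path_delta p :: _ \<Rightarrow> 'k::field)"
    and "i < d (path_end tgt p)" and "j < d (fst p)"
  shows "eval_path tgt d m (snd p) i j = 0"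
proof -
  have "{q. (path_delta p q :: 'k) \<noteq> 0 \<and> fst q = fst p \<and> path_end tgt q = path_end tgt p} = {p}"
    by (auto simp: path_delta_def)
  with assms show ?thesis
    unfolding annihilates_def by (fastforce simp: path_delta_def)
qed

lemma path_delta_in_path_alg:
  "is_path src tgt p \<Longrightarrow> (path_delta p :: _ \<Rightarrow> 'k::field) \<in> path_alg src tgt"
  by (simp add: path_alg_def path_delta_def)

lemma annihilates_add:
  fixes f h :: "('v \<times> 'a list) \<Rightarrow> 'k::field"
  assumes "f \<in> path_alg src tgt" "h \<in> path_alg src tgt"
    and "annihilates src tgt d m f" "annihilates src tgt d m h"
  shows "annihilates src tgt d m (f + h)"
  unfolding annihilates_def
proof (intro allI impI)
  fix u w i j assume ij: "i < d w" "j < d u"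
  define P where "P p \<longleftrightarrow> fst p = u \<and> path_end tgt p = w" for p :: "'v \<times> 'a list"
  define X where "X p = eval_path tgt d m (snd p) i j" for p :: "'v \<times> 'a list"
  define T where "T = {p. (f p \<noteq> 0 \<or> h p \<noteq> 0) \<and> P p}"
  have "finite T"
    using assms(1,2) by (auto simp: path_alg_def T_def intro: finite_subset[of _ "{p. f p \<noteq> 0} \<union> {p. h p \<noteq> 0}"])
  have restrict: "(\<Sum>p\<in>{p. F p \<noteq> 0 \<and> P p}. F p * X p) = (\<Sum>p\<in>T. F p * X p)"
    if "\<And>p. F p \<noteq> 0 \<Longrightarrow> f p \<noteq> 0 \<or> h p \<noteq> 0" for F
    by (rule sum.mono_neutral_left) (use \<open>finite T\<close> that in \<open>auto simp: T_def\<close>)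
  have "(\<Sum>p\<in>{p. (f + h) p \<noteq> 0 \<and> P p}. (f + h) p * X p)
      = (\<Sum>p\<in>T. f p * X p) + (\<Sum>p\<in>T. h p * X p)"
    by (subst restrict) (auto simp: distrib_right sum.distrib)
  also have "\<dots> = (\<Sum>p\<in>{p. f p \<noteq> 0 \<and> P p}. f p * X p) + (\<Sum>p\<in>{p. h p \<noteq> 0 \<and> P p}. h p * X p)"
    by (simp add: restrict)
  also have "\<dots> = 0"
    using assms(3,4) ij unfolding annihilates_def P_def X_def by simp
  finally show "(\<Sum>p\<in>{p. (f + h) p \<noteq> 0 \<and> fst p = u \<and> path_end tgt p = w}.
      (f + h) p * eval_path tgt d m (snd p) i j) = 0"
    by (simp add: P_def X_def)
qed

definition loops_act_trivially :: "('a \<Rightarrow> 'v) \<Rightarrow> ('a \<Rightarrow> 'v) \<Rightarrow> ('v \<Rightarrow> nat)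
    \<Rightarrow> ('a \<Rightarrow> nat \<Rightarrow> nat \<Rightarrow> 'k::field) \<Rightarrow> bool" where
  "loops_act_trivially src tgt d m \<longleftrightarrow>
     (\<forall>g. is_loop src tgt g \<longrightarrow> (\<forall>i<d (src g). \<forall>j<d (src g). m g i j = 0))"

lemma mmul_loop_left:
  assumes "loops_act_trivially src tgt d m" "is_loop src tgt g" "i < d (src g)"
  shows "mmul (d (src g)) (m g) X i j = 0"
  using assms by (simp add: mmul_def loops_act_trivially_def)

lemma mmul_loop_right:
  assumes "loops_act_trivially src tgt d m" "is_loop src tgt g" "j < d (src g)"
  shows "mmul (d (src g)) X (m g) i j = 0"
  using assms by (simp add: mmul_def loops_act_trivially_def)

lemma annihilates_loop_span:
  assumes "loops_act_trivially src tgt d m" and "h \<in> loop_span src tgt"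
  shows "annihilates src tgt d m h"
  unfolding annihilates_def
proof (intro allI impI)
  fix u w i j assume "i < d w" "j < d u"
  have "eval_path tgt d m (snd p) i j = 0" if "h p \<noteq> 0" "fst p = u" for p
  proof -
    from assms(2) that(1) have "is_path src tgt p" and "\<exists>g\<in>set (snd p). is_loop src tgt g"
      unfolding loop_span_def path_alg_def by blast+
    then obtain g where g: "g \<in> set (snd p)" "is_loop src tgt g" by blast
    have "is_path src tgt (u, snd p)"
      using \<open>is_path src tgt p\<close> that(2) by (cases p) simp
    moreover have "\<forall>i<d (tgt g). \<forall>j<d (src g). m g i j = 0"
      using assms(1) g(2) unfolding loops_act_trivially_def is_loop_def by metis
    ultimately show ?thesis
      using g(1) \<open>j < d u\<close> by (intro eval_path_eq_0_if_arrow_acts_trivially)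
  qed
  then show "(\<Sum>p\<in>{p. h p \<noteq> 0 \<and> fst p = u \<and> path_end tgt p = w}.
      h p * eval_path tgt d m (snd p) i j) = 0"
    by (intro sum.neutral) auto
qed

lemma is_module_loop_reduced_iff:
  assumes "I \<subseteq> path_alg src tgt" and "0 \<in> I"
  shows "is_module src tgt (loop_reduced_ideal src tgt I) d m \<longleftrightarrow>
         is_module src tgt I d m \<and> loops_act_trivially src tgt d m"
proof
  assume B: "is_module src tgt (loop_reduced_ideal src tgt I) d m"
  have "0 \<in> loop_span src tgt" by (simp add: loop_span_def path_alg_def)
  then have "I \<subseteq> loop_reduced_ideal src tgt I"
    unfolding loop_reduced_ideal_def by (force intro: exI[of _ 0])
  with B have "is_module src tgt I d m" by (auto simp: is_module_def)
  moreover have "loops_act_trivially src tgt d m"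
    unfolding loops_act_trivially_def
  proof (intro allI impI)
    fix g i j assume g: "is_loop src tgt g" and ij: "i < d (src g)" "j < d (src g)"
    have "path_delta (src g, [g]) \<in> loop_span src tgt"
      using path_delta_in_path_alg[of src tgt "(src g, [g])"] g
      by (auto simp: loop_span_def path_delta_def is_path_def)
    then have "path_delta (src g, [g]) \<in> loop_reduced_ideal src tgt I"
      unfolding loop_reduced_ideal_def using assms(2) by force
    with B have "annihilates src tgt d m (path_delta (src g, [g]))"
      by (simp add: is_module_def)
    from annihilates_path_delta[OF this, of i j] g ij show "m g i j = 0"
      by (simp add: path_end_def is_loop_def mmul_idm_left)
  qed
  ultimately show "is_module src tgt I d m \<and> loops_act_trivially src tgt d m" ..
next
  assume A: "is_module src tgt I d m \<and> loops_act_trivially src tgt d m"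
  show "is_module src tgt (loop_reduced_ideal src tgt I) d m"
    unfolding is_module_def
  proof
    fix h assume "h \<in> loop_reduced_ideal src tgt I"
    then obtain f l where h: "h = f + l" and "f \<in> I" and l: "l \<in> loop_span src tgt"
      unfolding loop_reduced_ideal_def by blast
    moreover have "l \<in> path_alg src tgt" using l by (simp add: loop_span_def)
    ultimately show "annihilates src tgt d m h"
      using A assms(1) by (auto simp: is_module_def intro: annihilates_add annihilates_loop_span)
  qed
qed

lemma ext_mat_loops_act_trivially:
  assumes "loops_act_trivially src tgt dM mM" "loops_act_trivially src tgt dN mN"
    and "\<forall>g. is_loop src tgt g \<longrightarrow> (\<forall>i<dN (src g). \<forall>j<dM (src g). \<delta> g i j = 0)"
  shows "loops_act_trivially src tgt (ext_dim dM dN) (ext_mat src tgt dM mM dN mN \<delta>)"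
  using assms unfolding loops_act_trivially_def
  by (auto simp: ext_mat_def ext_dim_def is_loop_def)

lemma ext_cocycles_loop_reduced:
  assumes "I \<subseteq> path_alg src tgt" "0 \<in> I"
    and "loops_act_trivially src tgt dM mM" "loops_act_trivially src tgt dN mN"
  shows "ext_cocycles src tgt (loop_reduced_ideal src tgt I) dM mM dN mN =
    {\<delta> \<in> ext_cocycles src tgt I dM mM dN mN.
       \<forall>g. is_loop src tgt g \<longrightarrow> (\<forall>i<dN (src g). \<forall>j<dM (src g). \<delta> g i j = 0)}"
proof -
  have "(\<forall>i<dN (src g). \<forall>j<dM (src g). \<delta> g i j = 0)"
    if "loops_act_trivially src tgt (ext_dim dM dN) (ext_mat src tgt dM mM dN mN \<delta>)"
      and "is_loop src tgt g" for \<delta> g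
  proof (intro allI impI)
    fix i j assume "i < dN (src g)" "j < dM (src g)"
    with that have "ext_mat src tgt dM mM dN mN \<delta> g i (dN (src g) + j) = 0"
      unfolding loops_act_trivially_def ext_dim_def by simp
    with \<open>is_loop src tgt g\<close> \<open>i < dN (src g)\<close> show "\<delta> g i j = 0"
      by (simp add: ext_mat_def is_loop_def)
  qed
  with assms show ?thesis
    unfolding ext_cocycles_def is_module_loop_reduced_iff[OF assms(1,2)]
    by (auto intro: ext_mat_loops_act_trivially)
qed

lemma ext1_dim_loop_reduced_eq:
  assumes "I \<subseteq> path_alg src tgt" "0 \<in> I"
    and "loops_act_trivially src tgt dM mM" "loops_act_trivially src tgt dN mN"
    and "\<And>\<delta> g. \<delta> \<in> ext_cocycles src tgt I dM mM dN mN \<Longrightarrow> is_loop src tgt g \<Longrightarrow>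
           \<forall>i<dN (src g). \<forall>j<dM (src g). \<delta> g i j = 0"
  shows "ext1_dim src tgt I dM mM dN mN = ext1_dim src tgt (loop_reduced_ideal src tgt I) dM mM dN mN"
proof -
  have "ext_cocycles src tgt (loop_reduced_ideal src tgt I) dM mM dN mN =
        ext_cocycles src tgt I dM mM dN mN"
    using ext_cocycles_loop_reduced[OF assms(1-4)] assms(5) by blast
  then show ?thesis by (simp add: ext1_dim_def)
qed

lemma ext_mat_mmul_upper_right:
  assumes "tgt a = src b" "i < dN (tgt b)"
  shows "mmul (ext_dim dM dN (tgt a)) (ext_mat src tgt dM mM dN mN \<delta> b)
           (ext_mat src tgt dM mM dN mN \<delta> a) i (dN (src a) + j) =
         mmul (dN (tgt a)) (mN b) (\<delta> a) i j + mmul (dM (tgt a)) (\<delta> b) (mM a) i j"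
  using assms unfolding mmul_def ext_dim_def
  by (simp add: sum_lessThan_add_nat ext_mat_def)

lemma ext_cocycle_path_relation:
  assumes "\<delta> \<in> ext_cocycles src tgt I dM mM dN mN" "path_delta (src a, [a, b]) \<in> I"
    and "tgt a = src b" "i < dN (tgt b)" "j < dM (src a)"
  shows "mmul (dN (tgt a)) (mN b) (\<delta> a) i j + mmul (dM (tgt a)) (\<delta> b) (mM a) i j = 0"
proof -
  let ?E = "ext_mat src tgt dM mM dN mN \<delta>" and ?d = "ext_dim dM dN"
  have "annihilates src tgt ?d ?E (path_delta (src a, [a, b]))"
    using assms(1,2) by (simp add: ext_cocycles_def is_module_def)
  from annihilates_path_delta[OF this, of i "dN (src a) + j"]
  have "0 = eval_path tgt ?d ?E [a, b] i (dN (src a) + j)"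
    using assms(4,5) by (simp add: path_end_def ext_dim_def del: eval_path.simps)
  also have "\<dots> = mmul (?d (tgt a)) (?E b) (?E a) i (dN (src a) + j)"
    using assms(4) by (simp add: eval_path_pair ext_dim_def del: eval_path.simps)
  also have "\<dots> = mmul (dN (tgt a)) (mN b) (\<delta> a) i j + mmul (dM (tgt a)) (\<delta> b) (mM a) i j"
    using assms(3,4) by (rule ext_mat_mmul_upper_right)
  finally show ?thesis by simp
qed

definition concentrated_at :: "'v \<Rightarrow> (nat \<Rightarrow> nat \<Rightarrow> 'k::zero) \<Rightarrow> 'v \<Rightarrow> nat \<Rightarrow> nat \<Rightarrow> 'k" where
  "concentrated_at v X = (\<lambda>u. if u = v then X else (\<lambda>i j. 0))"

lemma ext_cocycle_at_loop_hom:
  assumes Z: "\<delta> \<in> ext_cocycles src tgt I dM mM dN mN" and "comm_loops src tgt I"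
    and M: "loops_act_trivially src tgt dM mM" and N: "loops_act_trivially src tgt dN mN"
    and g: "is_loop src tgt g"
  shows "concentrated_at (src g) (\<delta> g) \<in> hom_set src tgt dM mM dN mN"
  unfolding hom_set_def mem_Collect_eq
proof (intro allI impI)
  fix a i j assume ij: "i < dN (tgt a)" "j < dM (src a)"
  let ?h = "concentrated_at (src g) (\<delta> g)"
  have tg: "tgt g = src g" using g by (simp add: is_loop_def)
  consider "is_loop src tgt a" "src a = src g"
    | "\<not> is_loop src tgt a" "src a = src g"
    | "\<not> is_loop src tgt a" "tgt a = src g"
    | "src a \<noteq> src g" "tgt a \<noteq> src g"
    by (metis is_loop_def)
  then show "mmul (dN (src a)) (mN a) (?h (src a)) i j = mmul (dM (tgt a)) (?h (tgt a)) (mM a) i j"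
  proof cases
    case 1
    then have "tgt a = src a" by (simp add: is_loop_def)
    with ij mmul_loop_left[OF N 1(1)] mmul_loop_right[OF M 1(1)] show ?thesis by simp
  next
    case 2
    then have "path_delta (src g, [g, a]) \<in> I"
      using \<open>comm_loops src tgt I\<close> g tg by (simp add: comm_loops_def)
    from ext_cocycle_path_relation[OF Z this] 2 ij tg
    have "mmul (dN (src g)) (mN a) (\<delta> g) i j + mmul (dM (src g)) (\<delta> a) (mM g) i j = 0"
      by simp
    with 2 ij M g tg show ?thesis
      by (simp add: concentrated_at_def mmul_loop_right is_loop_def) (simp add: mmul_def)
  next
    case 3
    then have "path_delta (src a, [a, g]) \<in> I"
      using \<open>comm_loops src tgt I\<close> g by (simp add: comm_loops_def)
    from ext_cocycle_path_relation[OF Z this] 3 ij tg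
    have "mmul (dN (src g)) (mN g) (\<delta> a) i j + mmul (dM (src g)) (\<delta> g) (mM a) i j = 0"
      by simp
    with 3 ij N g tg show ?thesis
      by (simp add: concentrated_at_def mmul_loop_left is_loop_def) (simp add: mmul_def)
  next
    case 4
    then show ?thesis by (simp add: concentrated_at_def mmul_def)
  qed
qed

lemma brick_concentrated_dim_one:
  assumes brick: "is_brick src tgt d (m :: 'a \<Rightarrow> nat \<Rightarrow> nat \<Rightarrow> 'k::field)"
    and loops: "loops_act_trivially src tgt d m" and conc: "\<forall>u. u \<noteq> v \<longrightarrow> d u = 0"
  shows "d v = 1"
proof (rule ccontr)
  assume "d v \<noteq> 1"
  moreover have "0 < d v" using brick conc unfolding is_brick_def by (metis neq0_conv)
  ultimately have "1 < d v" by linarith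
  define e where "e = concentrated_at v (\<lambda>i j. if i = 0 \<and> j = 0 then 1 else (0 :: 'k))"
  have "e \<in> hom_set src tgt d m d m"
    unfolding hom_set_def mem_Collect_eq
  proof (intro allI impI)
    fix a i j assume ij: "i < d (tgt a)" "j < d (src a)"
    then have "src a = v" "tgt a = v" using conc by (metis not_less0)+
    then have "is_loop src tgt a" by (simp add: is_loop_def)
    with ij \<open>tgt a = v\<close> \<open>src a = v\<close> mmul_loop_left[OF loops] mmul_loop_right[OF loops]
    show "mmul (d (src a)) (m a) (e (src a)) i j = mmul (d (tgt a)) (e (tgt a)) (m a) i j"
      by metis
  qed
  then obtain c where "\<forall>i<d v. \<forall>j<d v. e v i j = c * idm i j"
    using brick unfolding is_brick_def by blast
  from this[rule_format, of 0 0] this[rule_format, of 1 1] \<open>1 < d v\<close>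
  show False by (simp add: e_def concentrated_at_def idm_def)
qed

lemma concentrated_dim_one_simple:
  fixes m :: "'a \<Rightarrow> nat \<Rightarrow> nat \<Rightarrow> 'k::field"
  assumes one: "d v = 1" and conc: "\<forall>u. u \<noteq> v \<longrightarrow> d u = 0"
  shows "is_simple src tgt d m"
  unfolding is_simple_def
proof (intro conjI allI impI)
  show "\<exists>v. 0 < d v" using one by (metis zero_less_one)
next
  fix U assume U: "is_subrep src tgt d m U"
  have "vecs 0 = {0 :: nat \<Rightarrow> 'k}" by (auto simp: vecs_def)
  then have elsewhere: "U u = {0}" if "u \<noteq> v" for u
    using U conc that unfolding is_subrep_def by (metis subset_singletonD empty_iff)
  show "(\<forall>v. U v = {0}) \<or> (\<forall>v. U v = vecs (d v))"
  proof (cases "U v \<subseteq> {0}")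
    case True
    then have "U v = {0}" using U unfolding is_subrep_def by blast
    then show ?thesis using elsewhere by metis
  next
    case False
    then obtain x where x: "x \<in> U v" "x \<noteq> 0" by blast
    have "x \<in> vecs 1" using U x one unfolding is_subrep_def by (metis subsetD)
    then have "x 0 \<noteq> 0"
      using x(2) by (auto simp: vecs_def fun_eq_iff) (metis Suc_leI neq0_conv)
    have "vecs 1 \<subseteq> U v"
    proof
      fix y :: "nat \<Rightarrow> 'k" assume "y \<in> vecs 1"
      have "(\<lambda>i. (y 0 / x 0) * x i) \<in> U v" using U x unfolding is_subrep_def by blast
      moreover have "(y 0 / x 0) * x i = y i" for i
        using \<open>x 0 \<noteq> 0\<close> \<open>x \<in> vecs 1\<close> \<open>y \<in> vecs 1\<close> by (cases "i = 0") (auto simp: vecs_def)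
      ultimately show "y \<in> U v" by simp
    qed
    moreover have "U v \<subseteq> vecs 1" using U one unfolding is_subrep_def by metis
    ultimately have "\<forall>u. U u = vecs (d u)"
      using elsewhere \<open>vecs 0 = {0}\<close> one conc by (metis subset_antisym)
    then show ?thesis ..
  qed
qed

lemma ext_cocycle_vanishes_on_loops_if_hom_zero:
  assumes "\<delta> \<in> ext_cocycles src tgt I dM mM dN mN" "comm_loops src tgt I"
    and "loops_act_trivially src tgt dM mM" "loops_act_trivially src tgt dN mN"
    and "hom_zero src tgt dM mM dN mN" and "is_loop src tgt g"
  shows "\<forall>i<dN (src g). \<forall>j<dM (src g). \<delta> g i j = 0"
  using ext_cocycle_at_loop_hom[OF assms(1-4,6)] assms(5)
  unfolding hom_zero_def by (fastforce simp: concentrated_at_def)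

lemma ext_cocycle_vanishes_on_loops_if_brick_not_simple:
  assumes Z: "\<delta> \<in> ext_cocycles src tgt I dM mM dM mM" and "comm_loops src tgt I"
    and loops: "loops_act_trivially src tgt dM mM"
    and brick: "is_brick src tgt dM mM" and "\<not> is_simple src tgt dM mM"
    and g: "is_loop src tgt g"
  shows "\<forall>i<dM (src g). \<forall>j<dM (src g). \<delta> g i j = 0"
proof -
  let ?h = "concentrated_at (src g) (\<delta> g)"
  have "?h \<in> hom_set src tgt dM mM dM mM"
    using ext_cocycle_at_loop_hom[OF Z \<open>comm_loops src tgt I\<close> loops loops g] .
  then obtain c where scalar: "\<forall>u. \<forall>i<dM u. \<forall>j<dM u. ?h u i j = c * idm i j"
    using brick unfolding is_brick_def by blast
  have "c = 0"
  proof (rule ccontr)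
    assume "c \<noteq> 0"
    \<comment> \<open>at a vertex u \<noteq> src g with dM u > 0 we would get 0 = ?h u 0 0 = c\<close>
    then have "\<forall>u. u \<noteq> src g \<longrightarrow> dM u = 0"
      using scalar by (fastforce simp: concentrated_at_def idm_def)
    with brick_concentrated_dim_one[OF brick loops] have "is_simple src tgt dM mM"
      by (intro concentrated_dim_one_simple) auto
    with \<open>\<not> is_simple src tgt dM mM\<close> show False ..
  qed
  with spec[OF scalar, of "src g"] show ?thesis by (simp add: concentrated_at_def)
qed

theorem theorem3p3:
  fixes src tgt :: "'a::finite \<Rightarrow> 'v::finite"
    and I :: "(('v \<times> 'a list) \<Rightarrow> 'k::field) set"
  assumes "alg_closed_field TYPE('k)"
    and "quiver_connected src tgt"
    and "admissible src tgt I"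
    and "comm_loops src tgt I"
  shows "(\<forall>dM mM dN mN.
            is_module src tgt (loop_reduced_ideal src tgt I) dM mM \<and>
            is_module src tgt (loop_reduced_ideal src tgt I) dN mN \<and>
            hom_zero src tgt dM mM dN mN \<longrightarrow>
            ext1_dim src tgt I dM mM dN mN =
            ext1_dim src tgt (loop_reduced_ideal src tgt I) dM mM dN mN)
       \<and> (\<forall>dM mM.
            is_module src tgt (loop_reduced_ideal src tgt I) dM mM \<and>
            is_brick src tgt dM mM \<and> \<not> is_simple src tgt dM mM \<longrightarrow>
            ext1_dim src tgt I dM mM dM mM =
            ext1_dim src tgt (loop_reduced_ideal src tgt I) dM mM dM mM)"
proof -
  have I: "I \<subseteq> path_alg src tgt" "0 \<in> I"
    using assms(3) by (simp_all add: admissible_def is_ideal_def)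
  note loops = is_module_loop_reduced_iff[OF I, THEN iffD1, THEN conjunct2]
  show ?thesis
  proof (intro conjI allI impI; elim conjE)
    fix dM mM dN mN
    assume M: "is_module src tgt (loop_reduced_ideal src tgt I) dM mM"
      and N: "is_module src tgt (loop_reduced_ideal src tgt I) dN mN"
      and hom_zero: "hom_zero src tgt dM mM dN mN"
    from ext_cocycle_vanishes_on_loops_if_hom_zero[OF _ assms(4) loops[OF M] loops[OF N] hom_zero]
    show "ext1_dim src tgt I dM mM dN mN =
          ext1_dim src tgt (loop_reduced_ideal src tgt I) dM mM dN mN"
      by (rule ext1_dim_loop_reduced_eq[OF I loops[OF M] loops[OF N]])
  next
    fix dM mM
    assume M: "is_module src tgt (loop_reduced_ideal src tgt I) dM mM"
      and brick: "is_brick src tgt dM mM" and not_simple: "\<not> is_simple src tgt dM mM"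
    from ext_cocycle_vanishes_on_loops_if_brick_not_simple[OF _ assms(4) loops[OF M] brick not_simple]
    show "ext1_dim src tgt I dM mM dM mM =
          ext1_dim src tgt (loop_reduced_ideal src tgt I) dM mM dM mM"
      by (rule ext1_dim_loop_reduced_eq[OF I loops[OF M] loops[OF M]])
  qed
qed

end
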